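(* Let $\Delta$ be an even natural number, and for $j=1,2,\dots$ let $G_j$ be a graph on $n_j$ vertices with $n_j\to\infty$, of maximum degree $\Delta$, such that the number $z_j$ of vertices of $G_j$ of degree smaller than $\Delta$ satisfies $z_j=o(n_j)$. Then $\limsup_{j\to\infty}\alpha_{\mathrm{od}}(G_j)/n_j\le\frac{\Delta-1}{2\Delta-1}$.
   Context: An odd independent set in $G=(V,E)$ is an independent set $S$ such that every $v\in V\setminus S$ has either no neighbor or an odd number of neighbors in $S$; $\alpha_{\mathrm{od}}(G)$ is its maximum size. *)

theory Defs
  imports "HOL-Analysis.Analysis" "HOL-Library.Landau_Symbols"
begin

definition simple_graph :: "'a set \<Rightarrow> ('a \<Rightarrow> 'a \<Rightarrow> bool) \<Rightarrow> bool" where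
  "simple_graph V E \<longleftrightarrow> finite V \<and> (\<forall>u v. E u v \<longrightarrow> u \<in> V \<and> v \<in> V)
     \<and> (\<forall>u v. E u v \<longrightarrow> E v u) \<and> (\<forall>v. \<not> E v v)"

definition nbhd :: "'a set \<Rightarrow> ('a \<Rightarrow> 'a \<Rightarrow> bool) \<Rightarrow> 'a \<Rightarrow> 'a set" where
  "nbhd V E v = {u \<in> V. E v u}"

definition degree :: "'a set \<Rightarrow> ('a \<Rightarrow> 'a \<Rightarrow> bool) \<Rightarrow> 'a \<Rightarrow> nat" where
  "degree V E v = card (nbhd V E v)"

definition max_degree :: "'a set \<Rightarrow> ('a \<Rightarrow> 'a \<Rightarrow> bool) \<Rightarrow> nat" where
  "max_degree V E = Max (insert 0 (degree V E ` V))"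

definition independent_set :: "'a set \<Rightarrow> ('a \<Rightarrow> 'a \<Rightarrow> bool) \<Rightarrow> 'a set \<Rightarrow> bool" where
  "independent_set V E S \<longleftrightarrow> S \<subseteq> V \<and> (\<forall>u\<in>S. \<forall>v\<in>S. \<not> E u v)"

definition odd_independent_set :: "'a set \<Rightarrow> ('a \<Rightarrow> 'a \<Rightarrow> bool) \<Rightarrow> 'a set \<Rightarrow> bool" where
  "odd_independent_set V E S \<longleftrightarrow> independent_set V E S \<and>
     (\<forall>v \<in> V - S. card (nbhd V E v \<inter> S) = 0 \<or> odd (card (nbhd V E v \<inter> S)))"

definition alpha_od :: "'a set \<Rightarrow> ('a \<Rightarrow> 'a \<Rightarrow> bool) \<Rightarrow> nat" where
  "alpha_od V E = Max (card ` {S. odd_independent_set V E S})"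

end

theory Submission
  imports Defs
begin

text \<open>In a graph with \<open>n\<close> vertices, \<open>z\<close> of them of degree below \<open>\<Delta>\<close>, count the edges
  between an odd independent set \<open>S\<close> and its complement. Every vertex of
  \<open>S\<close> of full degree \<open>\<Delta>\<close> sends all its edges out of \<open>S\<close>, so there are at least
  \<open>\<Delta> (|S| - z)\<close> of them. A vertex outside \<open>S\<close> has \<open>0\<close> or an odd number of neighbours in \<open>S\<close>;
  as \<open>\<Delta>\<close> is even this number is at most \<open>\<Delta> - 1\<close>, so there are at most \<open>(\<Delta> - 1) (n - |S|)\<close>
  such edges. Hence \<open>(2\<Delta> - 1) |S| \<le> (\<Delta> - 1) n + \<Delta> z\<close>, and \<open>z = o(n)\<close> gives the limit.\<close>

lemma simple_graph_finite: "simple_graph V E \<Longrightarrow> finite V"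
  by (simp add: simple_graph_def)

lemma odd_independent_set_subset: "odd_independent_set V E S \<Longrightarrow> S \<subseteq> V"
  by (simp add: odd_independent_set_def independent_set_def)

lemma alpha_od_attained:
  assumes "simple_graph V E"
  obtains S where "odd_independent_set V E S" "alpha_od V E = card S"
proof -
  have "{S. odd_independent_set V E S} \<subseteq> Pow V"
    using odd_independent_set_subset by blast
  then have "finite (card ` {S. odd_independent_set V E S})"
    using simple_graph_finite[OF assms] by (meson finite_Pow_iff finite_imageI finite_subset)
  moreover have "odd_independent_set V E {}"
    by (simp add: odd_independent_set_def independent_set_def nbhd_def)
  ultimately have "alpha_od V E \<in> card ` {S. odd_independent_set V E S}"
    unfolding alpha_od_def by (intro Max_in) auto
  with that show ?thesis by blast
qed

lemma degree_le_max_degree: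
  assumes "simple_graph V E" "v \<in> V"
  shows "degree V E v \<le> max_degree V E"
  unfolding max_degree_def using assms simple_graph_finite by (intro Max_ge) auto

lemma sum_degree_independent_set:
  assumes "simple_graph V E" "independent_set V E S"
  shows "(\<Sum>u\<in>S. degree V E u) = (\<Sum>v\<in>V - S. card (nbhd V E v \<inter> S))"
proof -
  have fin: "finite V" and sym: "E u v = E v u" for u v
    using assms(1) by (auto simp: simple_graph_def)
  have SV: "S \<subseteq> V" and finS: "finite S"
    using assms(2) fin by (auto simp: independent_set_def intro: finite_subset)
  have "nbhd V E u = {v \<in> V - S. E u v}" if "u \<in> S" for u
    using assms(2) that by (auto simp: nbhd_def independent_set_def)
  then have "(\<Sum>u\<in>S. degree V E u) = (\<Sum>u\<in>S. \<Sum>v\<in>V - S. if E u v then 1 else 0)"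
    using fin by (simp add: degree_def sum.inter_filter[symmetric])
  also have "\<dots> = (\<Sum>v\<in>V - S. \<Sum>u\<in>S. if E u v then 1 else 0)"
    by (rule sum.swap)
  also have "\<dots> = (\<Sum>v\<in>V - S. card {u \<in> S. E v u})"
    using finS by (simp add: sum.inter_filter[symmetric] sym)
  also have "\<dots> = (\<Sum>v\<in>V - S. card (nbhd V E v \<inter> S))"
    using SV by (intro sum.cong refl arg_cong[where f = card]) (auto simp: nbhd_def)
  finally show ?thesis .
qed

lemma card_nbhd_inter_odd_independent_set_le:
  assumes "simple_graph V E" "max_degree V E = \<Delta>" "even \<Delta>"
    and S: "odd_independent_set V E S" and v: "v \<in> V - S"
  shows "card (nbhd V E v \<inter> S) \<le> \<Delta> - 1"
proof -
  have "card (nbhd V E v \<inter> S) \<le> degree V E v"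
    unfolding degree_def using simple_graph_finite[OF assms(1)]
    by (intro card_mono) (auto simp: nbhd_def)
  also have "\<dots> \<le> \<Delta>"
    using degree_le_max_degree[OF assms(1)] v assms(2) by auto
  finally have "card (nbhd V E v \<inter> S) \<le> \<Delta>" .
  moreover have "card (nbhd V E v \<inter> S) = 0 \<or> odd (card (nbhd V E v \<inter> S))"
    using S v by (simp add: odd_independent_set_def)
  ultimately show ?thesis
    using \<open>even \<Delta>\<close> by (cases "card (nbhd V E v \<inter> S) = \<Delta>") auto
qed

lemma odd_independent_set_card_bound:
  assumes G: "simple_graph V E" and "max_degree V E = \<Delta>" "even \<Delta>"
    and S: "odd_independent_set V E S"
  shows "(2 * \<Delta> - 1) * card S \<le> (\<Delta> - 1) * card V + \<Delta> * card {v \<in> V. degree V E v < \<Delta>}"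
    (is "_ \<le> _ + \<Delta> * card ?Z")
proof -
  have fin: "finite V" and SV: "S \<subseteq> V"
    using simple_graph_finite[OF G] odd_independent_set_subset[OF S] .
  then have finS: "finite S" by (rule finite_subset[rotated])
  have "\<Delta> * card S \<le> (\<Sum>u\<in>S. degree V E u + (if u \<in> ?Z then \<Delta> else 0))"
    by (subst card_eq_sum, subst sum_distrib_left, intro sum_mono) (use SV in auto)
  also have "\<dots> = (\<Sum>u\<in>S. degree V E u) + \<Delta> * card (S \<inter> ?Z)"
    using finS by (simp add: sum.distrib sum.If_cases)
  also have "\<dots> \<le> (\<Sum>v\<in>V - S. card (nbhd V E v \<inter> S)) + \<Delta> * card ?Z"
    using S fin by (simp add: sum_degree_independent_set[OF G] odd_independent_set_def card_mono)
  also have "\<dots> \<le> (\<Sum>v\<in>V - S. \<Delta> - 1) + \<Delta> * card ?Z"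
    using card_nbhd_inter_odd_independent_set_le[OF assms] by (intro add_right_mono sum_mono) auto
  also have "\<dots> = (\<Delta> - 1) * (card V - card S) + \<Delta> * card ?Z"
    using fin SV by (simp add: card_Diff_subset finS)
  finally have "\<Delta> * card S \<le> (\<Delta> - 1) * (card V - card S) + \<Delta> * card ?Z" .
  moreover have "card S \<le> card V"
    using fin SV by (rule card_mono)
  then have "(\<Delta> - 1) * (card V - card S) + (\<Delta> - 1) * card S = (\<Delta> - 1) * card V"
    by (metis add_mult_distrib2 le_add_diff_inverse2)
  moreover have "(2 * \<Delta> - 1) * card S = \<Delta> * card S + (\<Delta> - 1) * card S"
    by (cases \<Delta>) auto
  ultimately show ?thesis
    by linarith
qed

lemma alpha_od_ratio_bound:
  assumes G: "simple_graph V E" and "max_degree V E = \<Delta>" "even \<Delta>" and "V \<noteq> {}"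
  shows "real (alpha_od V E) / real (card V)
           \<le> (real \<Delta> - 1 + real \<Delta> * (real (card {v \<in> V. degree V E v < \<Delta>}) / real (card V)))
              / (2 * real \<Delta> - 1)"
proof -
  define n z where "n = real (card V)" and "z = real (card {v \<in> V. degree V E v < \<Delta>})"
  obtain S where S: "odd_independent_set V E S" and alpha: "alpha_od V E = card S"
    using alpha_od_attained[OF G] .
  have "n > 0"
    using \<open>V \<noteq> {}\<close> simple_graph_finite[OF G] by (simp add: n_def card_gt_0_iff)
  show ?thesis
  proof (cases "\<Delta> = 0")
    case True
    have "card S \<le> card V"
      using simple_graph_finite[OF G] odd_independent_set_subset[OF S] by (rule card_mono)
    then show ?thesis
      using True \<open>n > 0\<close> by (simp add: alpha n_def)
  next
    case False
    have "(2 * real \<Delta> - 1) * card S \<le> (real \<Delta> - 1) * n + real \<Delta> * z"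
      using of_nat_mono[OF odd_independent_set_card_bound[OF assms(1-3) S], where 'a = real] False
      by (simp add: of_nat_diff n_def z_def)
    then have "real (card S) \<le> ((real \<Delta> - 1) * n + real \<Delta> * z) / (2 * real \<Delta> - 1)"
      using False by (simp add: pos_le_divide_eq mult.commute)
    then have "real (card S) / n \<le> ((real \<Delta> - 1) * n + real \<Delta> * z) / (2 * real \<Delta> - 1) / n"
      using \<open>n > 0\<close> by (rule divide_right_mono[OF _ less_imp_le])
    also have "\<dots> = (real \<Delta> - 1 + real \<Delta> * (z / n)) / (2 * real \<Delta> - 1)"
      using \<open>n > 0\<close> by (simp add: field_simps)
    finally show ?thesis
      by (simp add: alpha n_def z_def)
  qed
qed

theorem proposition4:
  fixes \<Delta> :: nat
    and V :: "nat \<Rightarrow> 'a set" and E :: "nat \<Rightarrow> 'a \<Rightarrow> 'a \<Rightarrow> bool"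
  assumes "even \<Delta>"
    and graphs: "\<And>j. simple_graph (V j) (E j)"
    and n_inf: "filterlim (\<lambda>j. card (V j)) at_top sequentially"
    and maxdeg: "\<And>j. max_degree (V j) (E j) = \<Delta>"
    and z_small: "(\<lambda>j. real (card {v \<in> V j. degree (V j) (E j) v < \<Delta>}))
                    \<in> o(\<lambda>j. real (card (V j)))"
  shows "limsup (\<lambda>j. ereal (real (alpha_od (V j) (E j)) / real (card (V j))))
           \<le> ereal ((real \<Delta> - 1) / (2 * real \<Delta> - 1))"
proof -
  define r where "r j = real (card {v \<in> V j. degree (V j) (E j) v < \<Delta>}) / real (card (V j))" for j
  define bound where "bound j = (real \<Delta> - 1 + real \<Delta> * r j) / (2 * real \<Delta> - 1)" for j
  have "r \<longlonglongrightarrow> 0"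
    unfolding r_def using z_small by (rule smalloD_tendsto)
  moreover have "2 * real \<Delta> - 1 \<noteq> 0"
    using of_nat_eq_iff[of "2 * \<Delta>" 1, where 'a = real] by simp
  ultimately have "bound \<longlonglongrightarrow> (real \<Delta> - 1 + real \<Delta> * 0) / (2 * real \<Delta> - 1)"
    unfolding bound_def by (intro tendsto_intros)
  then have bound_lim: "(\<lambda>j. ereal (bound j)) \<longlonglongrightarrow> ereal ((real \<Delta> - 1) / (2 * real \<Delta> - 1))"
    by (simp add: tendsto_ereal)
  have ratio_le_bound: "real (alpha_od (V j) (E j)) / real (card (V j)) \<le> bound j"
    if "V j \<noteq> {}" for j
    unfolding bound_def r_def using alpha_od_ratio_bound[OF graphs maxdeg \<open>even \<Delta>\<close> that] .
  have nonempty: "eventually (\<lambda>j. V j \<noteq> {}) sequentially"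
    using n_inf unfolding filterlim_at_top by (force elim: allE[of _ 1] eventually_mono)
  have "limsup (\<lambda>j. ereal (real (alpha_od (V j) (E j)) / real (card (V j))))
                     \<le> limsup (\<lambda>j. ereal (bound j))"
    by (intro Limsup_mono eventually_mono[OF nonempty]) (simp add: ratio_le_bound)
  also have "\<dots> = ereal ((real \<Delta> - 1) / (2 * real \<Delta> - 1))"
    using lim_imp_Limsup[OF trivial_limit_sequentially bound_lim] .
  finally show ?thesis .
qed

end
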